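(* Let $q\ge3$ be an integer and $f(x)=\log\left|\frac{\sin\pi qx}{\sin\pi x}\right|$. For all $t\in\left(\frac{3}{8q},\frac{5}{8q}\right)$ and all $0<s\le q^{-1}-t$, $$H(t,s):=A(s)+B(t,s)<0,$$ where $A(s)=\log\frac{\sin\pi s}{\sin\pi(q^{-1}+s)}$ and $B(t,s)=f(0)-f(t)-f'(t)\frac{q^{-1}-t-s}{q-1}$.
   Context: $f(0)=\log q$ (value of $f$ at $0$ by continuity). *)

theory Defs
  imports "HOL-Analysis.Analysis"
begin

text \<open>f(x) = log |sin(pi q x) / sin(pi x)|, extended by continuity at 0 with f(0) = log q.\<close>
definition fq :: "nat \<Rightarrow> real \<Rightarrow> real" where
  "fq q x = (if x = 0 then ln (real q) else ln \<bar>sin (pi * real q * x) / sin (pi * x)\<bar>)"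

definition A5 :: "nat \<Rightarrow> real \<Rightarrow> real" where
  "A5 q s = ln (sin (pi * s) / sin (pi * (1 / real q + s)))"

definition B5 :: "nat \<Rightarrow> real \<Rightarrow> real \<Rightarrow> real" where
  "B5 q t s = fq q 0 - fq q t - deriv (fq q) t * ((1 / real q - t - s) / (real q - 1))"

definition H5 :: "nat \<Rightarrow> real \<Rightarrow> real \<Rightarrow> real" where
  "H5 q t s = A5 q s + B5 q t s"

end

theory Submission
  imports Defs
begin

(* Put s1 = 1/q - t, tau = q t and K = -f'(t)/(q - 1), so that
   H(t,s) = (A(s) - K s) + K s1 + f(0) - f(t).
   On (0, s1] we have A'(s) = pi sin(pi/q) / (sin(pi s) sin(pi (1/q + s))) >= sin(pi/q) / s1,
   while elementary bounds on cot give K <= sin(pi/q) / s1.  Hence s |-> A(s) - K s is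
   nondecreasing and H(t,s) <= H(t,s1).  At s = s1 the derivative term of B vanishes, and
   H(t,s1) < 0 becomes q sin(pi tau/q) sin(pi (1 - tau)/q) < sin(pi tau) sin(pi (2 - tau)/q).
   By sin x <= x the left side is at most (pi/4)(pi/q); the right side is bounded below using
   sin(pi tau) >= cos(pi/8) and the degree-7 Maclaurin lower bound for sine. *)

lemma sin_ge_Maclaurin7:
  fixes x :: real
  assumes "0 \<le> x"
  shows "x - x^3/6 + x^5/120 - x^7/5040 \<le> sin x"
proof -
  have "(\<Sum>m<7. sin_coeff m * x ^ m) = sin_coeff 0 * x^0 + sin_coeff 1 * x^1 + sin_coeff 2 * x^2
       + sin_coeff 3 * x^3 + sin_coeff 4 * x^4 + sin_coeff 5 * x^5 + sin_coeff 6 * x^6"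
    by (simp add: lessThan_nat_numeral sum.insert)
  also have "\<dots> = x - x^3/6 + x^5/120"
    by (simp add: sin_coeff_def fact_numeral)
  finally have taylor: "(\<Sum>m<7. sin_coeff m * x ^ m) = x - x^3/6 + x^5/120" .
  have "fact 7 = (5040::real)"
    by (simp add: fact_numeral)
  then have remainder: "inverse (fact 7) * \<bar>x\<bar> ^ 7 = x^7/5040"
    using assms by (simp add: inverse_eq_divide)
  have "\<bar>sin x - (x - x^3/6 + x^5/120)\<bar> \<le> x^7/5040"
    using Maclaurin_sin_bound[of x 7] unfolding taylor remainder .
  then show ?thesis
    by linarith
qed

lemma sin_ge_const_mult:
  fixes y Y c :: real
  assumes "0 \<le> y" "y \<le> Y" and c: "c \<le> 1 - Y^2/6 + Y^4/120 - Y^6/5040"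
  shows "c * y \<le> sin y"
proof -
  define p :: "real \<Rightarrow> real" where "p z = 1 - z/6 + z^2/120 - z^3/5040" for z
  have "p b \<le> p a" if "0 \<le> a" "a \<le> b" for a b
  proof -
    have "p a - p b = (b - a) * (((a + b - 28)^2 + 336)/6720 + (a - b)^2/20160)"
      by (simp add: p_def power2_eq_square power3_eq_cube field_simps)
    also have "\<dots> \<ge> 0" using that by (intro mult_nonneg_nonneg add_nonneg_nonneg) auto
    finally show ?thesis by simp
  qed
  then have "y * p (Y^2) \<le> y * p (y^2)"
    using assms by (intro mult_left_mono power_mono) auto
  moreover have "y * p (Y^2) = y * (1 - Y^2/6 + Y^4/120 - Y^6/5040)"
    by (simp add: p_def flip: power_mult)
  moreover have "y * p (y^2) = y - y^3/6 + y^5/120 - y^7/5040"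
    by (simp add: p_def field_simps power2_eq_square power3_eq_cube eval_nat_numeral)
  moreover have "c * y \<le> y * (1 - Y^2/6 + Y^4/120 - Y^6/5040)"
    using mult_right_mono[OF c assms(1)] by (simp add: mult.commute)
  ultimately show ?thesis
    using sin_ge_Maclaurin7[OF assms(1)] by linarith
qed

lemma cos_ge_one_minus_half_sq:
  fixes x :: real
  shows "1 - x^2/2 \<le> cos x"
proof -
  have "(sin (x/2))^2 \<le> (x/2)^2"
    using abs_sin_x_le_abs_x[of "x/2"] by (metis abs_ge_zero power2_abs power_mono)
  then show ?thesis
    using cos_double_sin[of "x/2"] by (simp add: power_divide)
qed

lemma cot_le_inverse:
  fixes y :: real
  assumes "0 < y" "y < pi/2"
  shows "cot y \<le> 1/y"
proof -
  have "0 < tan y" "y \<le> tan y"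
    using abs_tan_ge[of y] tan_gt_zero[of y] assms by auto
  then have "inverse (tan y) \<le> inverse y"
    using assms by (intro le_imp_inverse_le) auto
  then show ?thesis
    by (simp add: cot_altdef inverse_eq_divide)
qed

lemma sin_pi_mult_pos:
  fixes x :: real
  assumes "0 < x" "x < 1"
  shows "0 < sin (pi * x)"
  using assms by (intro sin_gt_zero) auto

lemma sin_pi_div_ge:
  fixes Q :: real
  assumes "3 \<le> Q"
  shows "2.59 / Q \<le> sin (pi / Q)"
proof -
  have "pi / Q \<le> 1.0472"
    using assms pi_approx by (simp add: divide_le_eq)
  then have "0.8269 * (pi / Q) \<le> sin (pi / Q)"
    using assms by (intro sin_ge_const_mult[of _ "1.0472"]) (auto simp: eval_nat_numeral)
  moreover have "2.59 / Q \<le> 0.8269 * (pi / Q)"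
    using assms pi_approx by (simp add: field_simps)
  ultimately show ?thesis by linarith
qed

lemma sin_pi_mult_ge:
  fixes \<tau> :: real
  assumes "3/8 < \<tau>" "\<tau> < 5/8"
  shows "0.9228 \<le> sin (pi * \<tau>)"
proof -
  have "pi * \<tau> - pi/2 = pi * (\<tau> - 1/2)"
    by (simp add: algebra_simps)
  then have "\<bar>pi * \<tau> - pi/2\<bar> = pi * \<bar>\<tau> - 1/2\<bar>"
    by (simp add: abs_mult)
  also have "\<dots> \<le> 3.1416 * (1/8)"
  proof (rule mult_mono)
    show "\<bar>\<tau> - 1/2\<bar> \<le> 1/8" using assms by arith
  qed (use pi_approx in auto)
  finally have "(pi * \<tau> - pi/2)^2 \<le> (3.1416/8)^2"
    by (subst power2_le_iff_abs_le) auto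
  moreover have "sin (pi * \<tau>) = cos (pi * \<tau> - pi/2)"
    by (simp add: cos_diff)
  ultimately show ?thesis
    using cos_ge_one_minus_half_sq[of "pi * \<tau> - pi/2"] by (simp add: power2_eq_square)
qed

lemma cot_pi_mult_bound:
  fixes \<tau> :: real
  assumes "3/8 < \<tau>" "\<tau> < 5/8"
  shows "(1 - \<tau>) * (1/\<tau> - pi * cot (pi * \<tau>)) \<le> 1.7"
proof -
  have sin_pos: "0.9228 \<le> sin (pi * \<tau>)"
    using sin_pi_mult_ge[OF assms] .
  show ?thesis
  proof (cases "\<tau> \<le> 1/2")
    case True
    have "0 \<le> pi * \<tau>" "pi * \<tau> \<le> pi/2"
      using assms True by auto
    then have "0 \<le> cos (pi * \<tau>)"
      using pi_gt_zero by (intro cos_ge_zero) linarith+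
    then have "0 \<le> pi * cot (pi * \<tau>)"
      using sin_pos by (simp add: cot_def)
    then have "(1 - \<tau>) * (1/\<tau> - pi * cot (pi * \<tau>)) \<le> (1 - \<tau>) * (1/\<tau>)"
      using assms by (intro mult_left_mono) auto
    also have "\<dots> \<le> 1.7"
      using assms by (simp add: field_simps)
    finally show ?thesis .
  next
    case False
    have "- cos (pi * \<tau>) = sin (pi * \<tau> - pi/2)"
      by (simp add: sin_diff)
    also have "\<dots> \<le> pi * \<tau> - pi/2"
      using False by (intro sin_x_le_x) (simp add: algebra_simps)
    also have "\<dots> = pi * (\<tau> - 1/2)"
      by (simp add: algebra_simps)
    also have "\<dots> \<le> pi * (1/8)"
      using assms by (intro mult_left_mono) auto
    finally have "pi * - cos (pi * \<tau>) \<le> pi * (pi * (1/8))"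
      by (intro mult_left_mono) auto
    also have "\<dots> \<le> 3.1416 * (3.1416 * (1/8))"
      using pi_approx by (intro mult_mono) auto
    finally have numerator: "pi * - cos (pi * \<tau>) \<le> 3.1416 * (3.1416 * (1/8))" .
    have "pi * - cos (pi * \<tau>) / sin (pi * \<tau>) \<le> 3.1416 * (3.1416 * (1/8)) / 0.9228"
      by (rule frac_le[OF _ numerator _ sin_pos]) auto
    then have "- (pi * cot (pi * \<tau>)) \<le> 3.1416 * (3.1416 * (1/8)) / 0.9228"
      by (simp add: cot_def)
    moreover have "1/\<tau> \<le> 2"
      using False by (simp add: field_simps)
    ultimately have "(1 - \<tau>) * (1/\<tau> - pi * cot (pi * \<tau>)) \<le> (1 - \<tau>) * 3.34"
      using assms by (intro mult_left_mono) auto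
    also have "\<dots> \<le> 1.7"
      using False by simp
    finally show ?thesis .
  qed
qed

lemma sin_two_minus_mult_ge:
  fixes \<tau> x :: real
  assumes "3/8 < \<tau>" "\<tau> < 5/8" and "0 < x" "x \<le> 1.0472"
  shows "0.86 * x \<le> sin ((2 - \<tau>) * x)"
proof (cases "\<tau> \<le> 1/2")
  case True
  have "0.58 * ((2 - \<tau>) * x) \<le> sin ((2 - \<tau>) * x)"
  proof (rule sin_ge_const_mult[of _ "13/8 * 1.0472"])
    show "(2 - \<tau>) * x \<le> 13/8 * 1.0472"
      using assms by (intro mult_mono) auto
  qed (use assms in \<open>auto simp: eval_nat_numeral\<close>)
  moreover have "0.86 * x \<le> 0.58 * ((2 - \<tau>) * x)"
    using True assms by (simp add: algebra_simps)
  ultimately show ?thesis by linarith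
next
  case False
  have "0.635 * ((2 - \<tau>) * x) \<le> sin ((2 - \<tau>) * x)"
  proof (rule sin_ge_const_mult[of _ "3/2 * 1.0472"])
    show "(2 - \<tau>) * x \<le> 3/2 * 1.0472"
      using assms False by (intro mult_mono) auto
  qed (use assms in \<open>auto simp: eval_nat_numeral\<close>)
  moreover have "0.86 * x \<le> 0.635 * ((2 - \<tau>) * x)"
    using assms by (simp add: algebra_simps)
  ultimately show ?thesis by linarith
qed

lemma sin_product_less:
  fixes Q \<tau> :: real
  assumes "3 \<le> Q" and "3/8 < \<tau>" "\<tau> < 5/8"
  shows "Q * sin (\<tau> * (pi/Q)) * sin ((1 - \<tau>) * (pi/Q)) < sin (pi * \<tau>) * sin ((2 - \<tau>) * (pi/Q))"
proof -
  define x where "x = pi/Q"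
  have x: "0 < x" "x \<le> 1.0472" "Q * x = pi"
    using assms pi_approx by (auto simp: x_def divide_le_eq)
  have "\<tau> * x \<le> x" "(1 - \<tau>) * x \<le> x"
    using assms x by (auto intro!: mult_left_le_one_le)
  moreover have "x \<le> pi"
    using x pi_approx by simp
  ultimately have "\<tau> * x \<le> pi" "(1 - \<tau>) * x \<le> pi"
    by linarith+
  then have "Q * sin (\<tau> * x) * sin ((1 - \<tau>) * x) \<le> Q * (\<tau> * x) * ((1 - \<tau>) * x)"
    using assms x by (intro mult_mono sin_x_le_x sin_ge_zero) auto
  also have "\<dots> = pi * (\<tau> * (1 - \<tau>)) * x"
    by (simp add: x(3)[symmetric] algebra_simps)
  also have "\<dots> \<le> 3.1416 * (1/4) * x"
  proof -
    have "\<tau> * (1 - \<tau>) \<le> 1/4"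
      using zero_le_power2[of "\<tau> - 1/2"] by (simp add: algebra_simps power2_eq_square)
    then show ?thesis
      using assms x pi_approx by (intro mult_right_mono mult_mono) auto
  qed
  also have "\<dots> < 0.9228 * (0.86 * x)"
    using x by simp
  also have "\<dots> \<le> sin (pi * \<tau>) * sin ((2 - \<tau>) * x)"
    using sin_pi_mult_ge[OF assms(2,3)] sin_two_minus_mult_ge[OF assms(2,3) x(1,2)] x
    by (intro mult_mono) auto
  finally show ?thesis unfolding x_def .
qed

lemma sin_pi_pos_below_inverse:
  fixes q :: nat and x :: real
  assumes "0 < x" "x < 1/q"
  shows "0 < sin (pi * q * x)" "0 < sin (pi * x)"
proof -
  have q: "1 \<le> real q"
    using assms by (cases q) auto
  then have qx: "0 < q * x" "q * x < 1"
    using assms by (auto simp: field_simps)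
  moreover have "x \<le> q * x"
    using q assms by simp
  ultimately have "x < 1"
    by linarith
  then show "0 < sin (pi * q * x)" "0 < sin (pi * x)"
    using sin_pi_mult_pos[OF qx] sin_pi_mult_pos[OF assms(1)] by (simp_all add: mult.assoc)
qed

lemma fq_eq_ln_diff:
  fixes q :: nat and x :: real
  assumes "0 < x" "x < 1/q"
  shows "fq q x = ln (sin (pi * q * x)) - ln (sin (pi * x))"
  using assms sin_pi_pos_below_inverse[OF assms] by (simp add: fq_def ln_div)

lemma fq_has_real_derivative:
  fixes q :: nat and t :: real
  assumes "0 < t" "t < 1/q"
  shows "(fq q has_real_derivative pi * q * cot (pi * q * t) - pi * cot (pi * t)) (at t)"
proof -
  have "((\<lambda>x. ln (sin (pi * q * x)) - ln (sin (pi * x))) has_real_derivative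
           pi * q * cot (pi * q * t) - pi * cot (pi * t)) (at t)"
    using sin_pi_pos_below_inverse[OF assms]
    by (auto intro!: derivative_eq_intros simp: cot_def field_simps)
  then show ?thesis
    by (rule has_field_derivative_transform_within_open[where S = "{0<..<1/q}"])
       (use assms fq_eq_ln_diff in auto)
qed

lemma A5_has_real_derivative:
  fixes q :: nat and x :: real
  assumes "0 < sin (pi * x)" "0 < sin (pi * (1/q + x))"
  shows "(A5 q has_real_derivative pi * sin (pi/q) / (sin (pi * x) * sin (pi * (1/q + x)))) (at x)"
proof -
  have "sin (pi * (1/q + x)) * cos (pi * x) - cos (pi * (1/q + x)) * sin (pi * x) = sin (pi/q)"
    using sin_diff[of "pi * (1/q + x)" "pi * x"] by (simp add: algebra_simps)
  then show ?thesis
    unfolding A5_def[abs_def] using assms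
    by (auto intro!: derivative_eq_intros simp: field_simps)
qed

lemma A5_minus_linear_mono:
  fixes q :: nat and K s s1 :: real
  assumes "0 < s" "s \<le> s1" "1/q + s1 < 1" and K: "K \<le> sin (pi/q) / s1"
  shows "A5 q s - K * s \<le> A5 q s1 - K * s1"
proof (rule DERIV_nonneg_imp_nondecreasing[OF \<open>s \<le> s1\<close>])
  fix x assume x: "s \<le> x" "x \<le> s1"
  have "0 \<le> 1/real q"
    by simp
  then have "0 < x" "x < 1" "0 < 1/q + x" "1/q + x < 1"
    using assms x by linarith+
  then have "0 < sin (pi * x)" "0 < sin (pi * (1/q + x))"
    using sin_pi_mult_pos by blast+
  then have "0 < sin (pi * x) * sin (pi * (1/q + x))"
    by simp
  moreover have "sin (pi * x) * sin (pi * (1/q + x)) \<le> pi * s1"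
  proof -
    have "sin (pi * x) * sin (pi * (1/q + x)) \<le> sin (pi * x)"
      using \<open>0 < sin (pi * x)\<close> by (intro mult_left_le) auto
    also have "\<dots> \<le> pi * x"
      using assms x by (intro sin_x_le_x) auto
    also have "\<dots> \<le> pi * s1"
      using x by simp
    finally show ?thesis .
  qed
  moreover have "0 \<le> sin (pi/q)"
    by (cases "q = 0") (auto intro!: sin_ge_zero simp: divide_le_eq)
  ultimately have "pi * sin (pi/q) / (pi * s1) \<le> pi * sin (pi/q) / (sin (pi * x) * sin (pi * (1/q + x)))"
    by (intro divide_left_mono) auto
  then show "\<exists>y. ((\<lambda>x. A5 q x - K * x) has_real_derivative y) (at x) \<and> 0 \<le> y"
    using A5_has_real_derivative[OF \<open>0 < sin (pi * x)\<close> \<open>0 < sin (pi * (1/q + x))\<close>] K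
    by (intro exI conjI derivative_eq_intros) auto
qed

lemma scaled_parameter_bounds:
  fixes q :: nat and t :: real
  assumes "3 \<le> q" "3 / (8 * real q) < t" "t < 5 / (8 * real q)"
  shows "3/8 < q * t" "q * t < 5/8" "0 < t" "t < 1/q"
proof -
  have q: "3 \<le> real q"
    using assms by simp
  show \<tau>: "3/8 < q * t" "q * t < 5/8"
    using assms q by (auto simp: field_simps)
  then have "0 < q * t" "q * t < 1"
    by linarith+
  then show "0 < t" "t < 1/q"
    using q by (simp_all add: zero_less_mult_iff field_simps)
qed

lemma neg_deriv_fq_slope_bound:
  fixes q :: nat and t :: real
  assumes "3 \<le> q" "3 / (8 * real q) < t" "t < 5 / (8 * real q)"
  shows "- deriv (fq q) t / (real q - 1) \<le> sin (pi/q) / (1/q - t)"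
proof -
  define \<tau> where "\<tau> = q * t"
  have q: "3 \<le> real q"
    using assms by simp
  have \<tau>: "3/8 < \<tau>" "\<tau> < 5/8" and t: "0 < t" "t < 1/q"
    using scaled_parameter_bounds[OF assms] by (simp_all add: \<tau>_def)
  have "1 / real q \<le> 1/3"
    using q by (intro divide_left_mono) auto
  then have t_half: "t < 1/2"
    using t by linarith
  have "deriv (fq q) t = pi * q * cot (pi * \<tau>) - pi * cot (pi * t)"
    using DERIV_imp_deriv[OF fq_has_real_derivative[OF t(1,2)]] by (simp add: \<tau>_def mult.assoc)
  moreover have "pi * cot (pi * t) \<le> pi * (1 / (pi * t))"
    using t t_half by (intro mult_left_mono cot_le_inverse) auto
  moreover have "pi * (1 / (pi * t)) = q * (1/\<tau>)"
    using q by (simp add: \<tau>_def)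
  ultimately have "- deriv (fq q) t \<le> q * (1/\<tau> - pi * cot (pi * \<tau>))"
    by (simp add: right_diff_distrib)
  then have "- deriv (fq q) t * (1 - \<tau>) \<le> q * (1/\<tau> - pi * cot (pi * \<tau>)) * (1 - \<tau>)"
    using \<tau> by (intro mult_right_mono) auto
  also have "\<dots> = q * ((1 - \<tau>) * (1/\<tau> - pi * cot (pi * \<tau>)))"
    by (simp add: mult_ac)
  also have "\<dots> \<le> q * 1.7"
    using cot_pi_mult_bound[OF \<tau>] by (intro mult_left_mono) auto
  also have "\<dots> \<le> (real q - 1) * 2.59"
    using q by simp
  also have "\<dots> \<le> (real q - 1) * (q * sin (pi/q))"
    using sin_pi_div_ge[OF q] q by (intro mult_left_mono) (auto simp: field_simps)
  finally have "- deriv (fq q) t * (1 - \<tau>) / ((real q - 1) * (1 - \<tau>))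
      \<le> (real q - 1) * (q * sin (pi/q)) / ((real q - 1) * (1 - \<tau>))"
    using \<tau> q by (intro divide_right_mono) auto
  moreover have "1 - \<tau> \<noteq> 0" "real q - 1 \<noteq> 0"
    using \<tau> q by auto
  ultimately have "- deriv (fq q) t / (real q - 1) \<le> q * sin (pi/q) / (1 - \<tau>)"
    by (metis mult_divide_mult_cancel_right mult_divide_mult_cancel_left)
  also have "q * sin (pi/q) / (1 - \<tau>) = sin (pi/q) / (1/q - t)"
    using q by (simp add: \<tau>_def field_simps)
  finally show ?thesis .
qed

lemma H5_le_H5_endpoint:
  fixes q :: nat and t s :: real
  assumes "0 < s" "s \<le> 1/q - t" "2/q - t < 1"
    and slope: "- deriv (fq q) t / (real q - 1) \<le> sin (pi/q) / (1/q - t)"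
  shows "H5 q t s \<le> H5 q t (1/q - t)"
proof -
  define K where "K = - deriv (fq q) t / (real q - 1)"
  have "1/q + (1/q - t) < 1"
    using assms(3) by simp
  then have "A5 q s - K * s \<le> A5 q (1/q - t) - K * (1/q - t)"
    using assms(1,2) slope by (intro A5_minus_linear_mono) (simp_all add: K_def)
  moreover have "deriv (fq q) t * ((1/q - t - s) / (real q - 1)) = - K * (1/q - t - s)"
    by (simp add: K_def)
  ultimately show ?thesis
    by (simp add: H5_def B5_def algebra_simps)
qed

lemma H5_endpoint_neg:
  fixes q :: nat and t :: real
  assumes "3 \<le> q" "3 / (8 * real q) < t" "t < 5 / (8 * real q)"
  shows "H5 q t (1/q - t) < 0"
proof -
  define \<tau> where "\<tau> = q * t"
  have q: "3 \<le> real q"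
    using assms by simp
  have \<tau>: "3/8 < \<tau>" "\<tau> < 5/8" and t: "0 < t" "t < 1/q"
    using scaled_parameter_bounds[OF assms] by (simp_all add: \<tau>_def)
  have angles: "\<tau> * (pi/q) = pi * t" "(1 - \<tau>) * (pi/q) = pi * (1/q - t)"
    "(2 - \<tau>) * (pi/q) = pi * (1/q + (1/q - t))" "pi * \<tau> = pi * q * t"
    using q by (auto simp: \<tau>_def field_simps)
  have "1 / real q \<le> 1/3"
    using q by (intro divide_left_mono) auto
  then have s1: "0 < 1/q - t" "1/q - t < 1" "0 < 1/q + (1/q - t)" "1/q + (1/q - t) < 1"
    using t by linarith+
  have pos: "0 < sin (pi * (1/q - t))" "0 < sin (pi * (1/q + (1/q - t)))"
    using sin_pi_mult_pos[OF s1(1,2)] sin_pi_mult_pos[OF s1(3,4)] .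
  have "q * sin (pi * t) * sin (pi * (1/q - t)) < sin (pi * q * t) * sin (pi * (1/q + (1/q - t)))"
    using sin_product_less[OF q \<tau>] unfolding angles .
  then have "ln (q * sin (pi * t) * sin (pi * (1/q - t)))
      < ln (sin (pi * q * t) * sin (pi * (1/q + (1/q - t))))"
    using pos sin_pi_pos_below_inverse[OF t] q by (subst ln_less_cancel_iff) auto
  then have "ln q + ln (sin (pi * t)) + ln (sin (pi * (1/q - t)))
      < ln (sin (pi * q * t)) + ln (sin (pi * (1/q + (1/q - t))))"
    using pos sin_pi_pos_below_inverse[OF t] q by (simp add: ln_mult)
  moreover have "H5 q t (1/q - t) = ln (sin (pi * (1/q - t))) - ln (sin (pi * (1/q + (1/q - t))))
      + ln q - (ln (sin (pi * q * t)) - ln (sin (pi * t)))"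
    using pos by (simp add: H5_def B5_def A5_def fq_eq_ln_diff[OF t] fq_def[of q 0] ln_div)
  ultimately show ?thesis
    by linarith
qed

theorem lemma5p8:
  fixes q :: nat and t s :: real
  assumes "q \<ge> 3"
    and "3 / (8 * real q) < t" and "t < 5 / (8 * real q)"
    and "0 < s" and "s \<le> 1 / real q - t"
  shows "H5 q t s < 0"
proof -
  have "2/q - t < 1"
    using assms by (auto simp: field_simps)
  then have "H5 q t s \<le> H5 q t (1/q - t)"
    using assms neg_deriv_fq_slope_bound by (intro H5_le_H5_endpoint) auto
  also have "\<dots> < 0"
    using assms(1-3) by (rule H5_endpoint_neg)
  finally show ?thesis .
qed

end
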